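(* Let $1 \leq k \leq n-1$ and let $\mathcal{E}_1,\ldots,\mathcal{E}_k$ be ellipsoids in $\mathbb{R}^n$. Define the body $L$ by $\rho_L = \rho_{\mathcal{E}_1}\cdots\rho_{\mathcal{E}_k}$, and let $k \leq l \leq n-1$. Then there exists a sequence of star-bodies $\{L_i\}$ which tends to $L$ in the radial metric and such that for each $i$, $\rho_{L_i} = \rho_{\mathcal{E}^i_1}^{l} + \ldots + \rho_{\mathcal{E}^i_{m_i}}^{l}$ for some ellipsoids $\mathcal{E}^i_1,\ldots,\mathcal{E}^i_{m_i}$.
   Context: Ellipsoids are centered at the origin (images of the Euclidean unit ball under full-rank linear maps). For a star-body $K$ (centrally-symmetric, with continuous positive radial function), $\rho_K(\theta) = \max\{r>0: r\theta\in K\}$ for $\theta \in S^{n-1}$. The radial metric is $d_r(K_1,K_2)=\sup_{\theta\in S^{n-1}}|\rho_{K_1}(\theta)-\rho_{K_2}(\theta)|$. *)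

theory Defs
  imports "HOL-Analysis.Analysis"
begin

definition is_ellipsoid :: "'a::euclidean_space set \<Rightarrow> bool" where
  "is_ellipsoid E \<longleftrightarrow> (\<exists>f::'a \<Rightarrow> 'a. linear f \<and> inj f \<and> E = f ` cball 0 1)"

definition radial :: "'a::euclidean_space set \<Rightarrow> 'a \<Rightarrow> real" where
  "radial K \<theta> = Sup {r. r > 0 \<and> r *\<^sub>R \<theta> \<in> K}"

definition star_body :: "'a::euclidean_space set \<Rightarrow> bool" where
  "star_body K \<longleftrightarrow> compact K
     \<and> (\<forall>x\<in>K. \<forall>t\<in>{0..1}. t *\<^sub>R x \<in> K)
     \<and> (\<forall>x\<in>K. - x \<in> K)
     \<and> continuous_on (sphere 0 1) (radial K)
     \<and> (\<forall>\<theta>\<in>sphere 0 1. radial K \<theta> > 0)"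

definition body_of_radial :: "('a::euclidean_space \<Rightarrow> real) \<Rightarrow> 'a set" where
  "body_of_radial \<rho> = {x. x = 0 \<or> norm x \<le> \<rho> (x /\<^sub>R norm x)}"

definition radial_dist :: "'a::euclidean_space set \<Rightarrow> 'a set \<Rightarrow> real" where
  "radial_dist K1 K2 = (SUP \<theta>\<in>sphere 0 1. \<bar>radial K1 \<theta> - radial K2 \<theta>\<bar>)"

end

theory Submission
  imports Defs
begin

(* For x, y > 0 and p >= 1, the substitution t = x w / y shows
     1 / (x^p y) = (1/C) * int_0^oo (x^2 + t^2 y^2) powr (-(p+1)/2) dt,
   where C = int_0^oo (1 + w^2) powr (-(p+1)/2) dw, and Riemann sums of this integral with
   mesh delta approximate 1 / (x^p y) uniformly for x, y in a compact subinterval of (0, oo).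
   For x = |h theta| and y = |g theta| with linear isomorphisms h, g, each summand
   (x^2 + (delta k y)^2) powr (-(p+1)/2), scaled by a constant, is 1 / |H theta|^(p+1) for a
   linear isomorphism H, i.e. the (p+1)-st power of the radial function of the ellipsoid
   H^-1(B).  By induction on the number of factors, a product of l radial functions of
   ellipsoids is a uniform limit on the sphere of sums of l-th powers of such radial
   functions; a product of k <= l factors is padded with copies of the unit ball, whose
   radial function is 1 on the sphere. *)

lemma one_plus_square_pos: "1 + (w::real)\<^sup>2 > 0"
  by (simp add: add_pos_nonneg)

lemma continuous_on_kernel: "continuous_on S (\<lambda>w::real. (1 + w\<^sup>2) powr (-s))"
  using one_plus_square_pos by (intro continuous_intros) (metis less_irrefl)

lemma kernel_integral_le_arctan:
  fixes s T :: real
  assumes "s \<ge> 1" "T \<ge> 0"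
  shows "integral {0..T} (\<lambda>w. (1 + w\<^sup>2) powr (-s)) \<le> arctan T"
proof -
  have "((\<lambda>w. inverse (1 + w\<^sup>2)) has_integral (arctan T - arctan 0)) {0..T}"
    by (rule fundamental_theorem_of_calculus)
       (use assms in \<open>auto intro!: derivative_eq_intros
          simp: has_real_derivative_iff_has_vector_derivative[symmetric]\<close>)
  moreover have "(1 + w\<^sup>2) powr (-s) \<le> inverse (1 + w\<^sup>2)" for w :: real
  proof -
    have "(1 + w\<^sup>2) powr (-s) \<le> (1 + w\<^sup>2) powr (-1)"
      using assms(1) by (intro powr_mono) auto
    then show ?thesis
      using one_plus_square_pos[of w] by (simp add: powr_minus)
  qed
  ultimately have "integral {0..T} (\<lambda>w. (1 + w\<^sup>2) powr (-s)) \<le> arctan T - arctan 0"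
    by (intro has_integral_le[OF integrable_integral] integrable_continuous_interval
        continuous_on_kernel)
  then show ?thesis
    by simp
qed

lemma kernel_antimono:
  fixes s u v :: real
  assumes "0 \<le> s" "0 \<le> u" "u \<le> v"
  shows "(1 + v\<^sup>2) powr (-s) \<le> (1 + u\<^sup>2) powr (-s)"
  using assms one_plus_square_pos[of u] by (intro powr_mono2') (auto intro: power_mono)

lemma kernel_integral_mono:
  fixes a b :: real
  assumes "0 \<le> a" "a \<le> b"
  shows "integral {0..a} (\<lambda>w. (1 + w\<^sup>2) powr (-s)) \<le> integral {0..b} (\<lambda>w. (1 + w\<^sup>2) powr (-s))"
  using assms by (intro integral_subset_le integrable_continuous_interval continuous_on_kernel) auto

lemma kernel_integral_pos:
  fixes s T :: real
  assumes "0 \<le> s" "T > 0"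
  shows "integral {0..T} (\<lambda>w. (1 + w\<^sup>2) powr (-s)) > 0"
proof -
  have "integral {0..T} (\<lambda>_::real. (1 + T\<^sup>2) powr (-s)) \<le> integral {0..T} (\<lambda>w. (1 + w\<^sup>2) powr (-s))"
    using assms by (intro Henstock_Kurzweil_Integration.integral_le integrable_continuous_interval
        continuous_on_kernel kernel_antimono) auto
  moreover have "integral {0..T} (\<lambda>_::real. (1 + T\<^sup>2) powr (-s)) > 0"
    using assms one_plus_square_pos[of T] by simp
  ultimately show ?thesis
    by linarith
qed

lemma kernel_integral_converges:
  fixes s :: real
  assumes "s \<ge> 1"
  defines "\<Phi> \<equiv> \<lambda>T. integral {0..T} (\<lambda>w. (1 + w\<^sup>2) powr (-s))"
  shows "\<exists>C>0. (\<forall>T\<ge>0. \<Phi> T \<le> C) \<and> (\<forall>\<eta>>0. \<exists>T\<^sub>0. \<forall>T\<ge>T\<^sub>0. C - \<eta> < \<Phi> T)"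
proof -
  have bdd: "bdd_above (\<Phi> ` {0..})"
  proof (intro bdd_aboveI[of _ "pi/2"])
    fix y assume "y \<in> \<Phi> ` {0..}"
    then obtain T where "T \<ge> 0" "y = \<Phi> T"
      by auto
    then show "y \<le> pi/2"
      using kernel_integral_le_arctan[OF assms(1), of T] arctan_ubound[of T] by (simp add: \<Phi>_def)
  qed
  define C where "C = (SUP T\<in>{0..}. \<Phi> T)"
  have \<Phi>_le_C: "\<Phi> T \<le> C" if "T \<ge> 0" for T
    unfolding C_def using that bdd by (intro cSUP_upper) auto
  have C_pos: "C > 0"
    using kernel_integral_pos[of s 1] assms(1) \<Phi>_le_C[of 1] by (simp add: \<Phi>_def)
  have "\<exists>T\<^sub>0. \<forall>T\<ge>T\<^sub>0. C - \<eta> < \<Phi> T" if "\<eta> > 0" for \<eta>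
  proof -
    have "C - \<eta> < (SUP T\<in>{0..}. \<Phi> T)"
      using that by (simp add: C_def)
    then obtain T\<^sub>0 where T\<^sub>0: "T\<^sub>0 \<ge> 0" "C - \<eta> < \<Phi> T\<^sub>0"
      by (subst (asm) less_cSUP_iff[OF _ bdd]) auto
    have "C - \<eta> < \<Phi> T" if "T \<ge> T\<^sub>0" for T
      using T\<^sub>0 kernel_integral_mono[OF T\<^sub>0(1) that, of s] unfolding \<Phi>_def by linarith
    then show ?thesis
      by blast
  qed
  then show ?thesis
    using C_pos \<Phi>_le_C by blast
qed

lemma sum_squares_powr_eq:
  fixes x z :: real and p :: nat
  assumes x: "x > 0"
  shows "(x\<^sup>2 + z\<^sup>2) powr (- ((real p + 1) / 2)) = (1 + (z / x)\<^sup>2) powr (- ((real p + 1) / 2)) / x ^ (p + 1)"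
proof -
  define s where "s = (real p + 1) / 2"
  have "(x\<^sup>2) powr s = x powr (2 * s)"
    using x by (simp add: powr_powr flip: powr_numeral)
  also have "\<dots> = x powr real (p + 1)"
    by (simp add: s_def add_divide_distrib add.commute)
  also have "\<dots> = x ^ (p + 1)"
    using x by (rule powr_realpow)
  finally have "(x\<^sup>2) powr (-s) = 1 / x ^ (p + 1)"
    by (simp add: powr_minus divide_inverse)
  moreover have "x\<^sup>2 + z\<^sup>2 = x\<^sup>2 * (1 + (z / x)\<^sup>2)"
    using x by (simp add: field_simps power2_eq_square)
  ultimately show ?thesis
    unfolding s_def[symmetric] using one_plus_square_pos[of "z / x"] by (simp add: powr_mult)
qed

lemma antimono_sum_minus_integral_bounds:
  fixes f :: "real \<Rightarrow> real"
  assumes "\<And>u v. 0 \<le> u \<Longrightarrow> u \<le> v \<Longrightarrow> f v \<le> f u" "\<And>v. 0 \<le> v \<Longrightarrow> 0 \<le> f v"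
    and "continuous_on {0..} f"
  shows "0 \<le> (\<Sum>k\<le>n. f (real k)) - integral {0..real n} f"
    and "(\<Sum>k\<le>n. f (real k)) - integral {0..real n} f \<le> f 0"
proof -
  interpret antimono_fun_sum_integral_diff f
    using assms by unfold_locales auto
  show "0 \<le> (\<Sum>k\<le>n. f (real k)) - integral {0..real n} f"
    using sum_integral_diff_series_nonneg[of n] by (simp add: sum_integral_diff_series_def)
  show "(\<Sum>k\<le>n. f (real k)) - integral {0..real n} f \<le> f 0"
    using sum_integral_diff_series_antimono[of 0 n] by (simp add: sum_integral_diff_series_def)
qed

(* S is the Riemann sum with mesh \<delta> of int_0^(\<delta> n) (x^2 + t^2 y^2) powr (-(p+1)/2) dt,
   an integral which the substitution t = x w / y turns into \<Phi> (\<delta> n y / x) / (x^p y). *)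
lemma kernel_riemann_sum_bounds:
  fixes x y \<delta> :: real and p n :: nat
  assumes x: "x > 0" and y: "y > 0" and \<delta>: "\<delta> > 0"
  defines "\<Phi> \<equiv> \<lambda>T. integral {0..T} (\<lambda>w. (1 + w\<^sup>2) powr (- ((real p + 1) / 2)))"
    and "S \<equiv> \<delta> * (\<Sum>k\<le>n. (x\<^sup>2 + (\<delta> * real k * y)\<^sup>2) powr (- ((real p + 1) / 2)))"
  shows "0 \<le> S - \<Phi> (\<delta> * n * y / x) / (x ^ p * y)"
    and "S - \<Phi> (\<delta> * n * y / x) / (x ^ p * y) \<le> \<delta> / x ^ (p + 1)"
proof -
  define s where "s = (real p + 1) / 2"
  define c where "c = \<delta> * y / x"
  have c: "c > 0"
    using x y \<delta> by (simp add: c_def)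
  define g where "g v = (x\<^sup>2 + (\<delta> * v * y)\<^sup>2) powr (-s)" for v
  have g_eq: "g v = (1 + (c * v)\<^sup>2) powr (-s) / x ^ (p + 1)" for v
  proof -
    have "\<delta> * v * y / x = c * v"
      by (simp add: c_def)
    then show ?thesis
      unfolding g_def s_def sum_squares_powr_eq[OF x] by simp
  qed
  have integral_g: "\<delta> * integral {0..real n} g = \<Phi> (c * n) / (x ^ p * y)"
  proof -
    have "(\<lambda>v. v / c) ` {0..c * n} = {0..real n}"
      using c by simp
    then have "integral {0..real n} (\<lambda>v. (1 + (c * v)\<^sup>2) powr (-s)) = \<Phi> (c * n) / c"
      using integral_stretch_real[of c 0 "c * n" "\<lambda>w. (1 + w\<^sup>2) powr (-s)"] c
      by (simp add: \<Phi>_def s_def)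
    then show ?thesis
      using x y \<delta> unfolding g_eq c_def by (simp add: field_simps)
  qed
  have g_antimono: "g v \<le> g u" if "0 \<le> u" "u \<le> v" for u v
    unfolding g_eq using that c x
    by (intro divide_right_mono kernel_antimono) (auto simp: s_def intro: mult_left_mono)
  have g_nonneg: "0 \<le> g v" for v
    by (simp add: g_def)
  have g_cont: "continuous_on {0..} g"
    unfolding g_def using x
    by (intro continuous_intros) (metis add_pos_nonneg zero_le_power2 zero_less_power2 less_irrefl)
  have diff: "S - \<Phi> (\<delta> * n * y / x) / (x ^ p * y) = \<delta> * ((\<Sum>k\<le>n. g (real k)) - integral {0..real n} g)"
    unfolding S_def right_diff_distrib
    using integral_g by (simp add: g_def s_def c_def mult.commute mult.left_commute)
  have D: "0 \<le> (\<Sum>k\<le>n. g (real k)) - integral {0..real n} g"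
    "(\<Sum>k\<le>n. g (real k)) - integral {0..real n} g \<le> 1 / x ^ (p + 1)"
    using antimono_sum_minus_integral_bounds[OF g_antimono g_nonneg g_cont, of n] g_eq[of 0] by simp_all
  have "0 \<le> \<delta> * ((\<Sum>k\<le>n. g (real k)) - integral {0..real n} g)"
    using \<delta> D(1) by simp
  moreover have "\<delta> * ((\<Sum>k\<le>n. g (real k)) - integral {0..real n} g) \<le> \<delta> * (1 / x ^ (p + 1))"
    using \<delta> D(2) by (intro mult_left_mono) auto
  ultimately show "0 \<le> S - \<Phi> (\<delta> * n * y / x) / (x ^ p * y)"
    and "S - \<Phi> (\<delta> * n * y / x) / (x ^ p * y) \<le> \<delta> / x ^ (p + 1)"
    unfolding diff by simp_all
qed

lemma kernel_riemann_sum_error: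
  fixes x y \<delta> C \<eta> :: real and p n :: nat
  assumes x: "x > 0" and y: "y > 0" and \<delta>: "\<delta> > 0" and C: "C > 0"
  defines "\<Phi> \<equiv> \<lambda>T. integral {0..T} (\<lambda>w. (1 + w\<^sup>2) powr (- ((real p + 1) / 2)))"
  assumes \<Phi>_le: "\<Phi> (\<delta> * n * y / x) \<le> C" and \<Phi>_ge: "C - \<eta> \<le> \<Phi> (\<delta> * n * y / x)"
  shows "\<bar>1 / (x ^ p * y) - \<delta> / C * (\<Sum>k\<le>n. (x\<^sup>2 + (\<delta> * real k * y)\<^sup>2) powr (- ((real p + 1) / 2)))\<bar>
           \<le> (\<eta> / (x ^ p * y) + \<delta> / x ^ (p + 1)) / C"
proof -
  define A where "A = 1 / (x ^ p * y)"
  define T where "T = \<delta> * n * y / x"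
  define S where "S = \<delta> * (\<Sum>k\<le>n. (x\<^sup>2 + (\<delta> * real k * y)\<^sup>2) powr (- ((real p + 1) / 2)))"
  have A: "A > 0"
    using x y by (simp add: A_def)
  have "0 \<le> A * (C - \<Phi> T)" "A * (C - \<Phi> T) \<le> A * \<eta>"
    using A \<Phi>_le \<Phi>_ge by (simp_all add: T_def)
  moreover have "0 \<le> S - A * \<Phi> T" "S - A * \<Phi> T \<le> \<delta> / x ^ (p + 1)"
    using kernel_riemann_sum_bounds[OF x y \<delta>, of p n]
    by (simp_all add: S_def A_def T_def \<Phi>_def)
  ultimately have "\<bar>A * (C - \<Phi> T) - (S - A * \<Phi> T)\<bar> \<le> A * \<eta> + \<delta> / x ^ (p + 1)"
    by linarith
  moreover have "A - S / C = (A * (C - \<Phi> T) - (S - A * \<Phi> T)) / C"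
    using C by (simp add: field_simps)
  ultimately have "\<bar>A - S / C\<bar> \<le> (A * \<eta> + \<delta> / x ^ (p + 1)) / C"
    using C by (simp add: divide_right_mono)
  then show ?thesis
    by (simp add: A_def S_def)
qed

lemma inverse_power_mult_approx:
  fixes p :: nat and m R \<epsilon> :: real
  assumes p: "p \<ge> 1" and m: "m > 0" and \<epsilon>: "\<epsilon> > 0"
  shows "\<exists>\<delta>>0. \<exists>c>0. \<exists>n. \<forall>x y. m \<le> x \<longrightarrow> x \<le> R \<longrightarrow> m \<le> y \<longrightarrow> y \<le> R \<longrightarrow>
           \<bar>1 / (x ^ p * y) - c * (\<Sum>k\<le>n. (x\<^sup>2 + (\<delta> * real k * y)\<^sup>2) powr (- ((real p + 1) / 2)))\<bar> \<le> \<epsilon>"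
proof -
  define \<Phi> where "\<Phi> T = integral {0..T} (\<lambda>w. (1 + w\<^sup>2) powr (- ((real p + 1) / 2)))" for T :: real
  obtain C where C: "C > 0" and \<Phi>_le_C: "\<And>T. T \<ge> 0 \<Longrightarrow> \<Phi> T \<le> C"
    and \<Phi>_tendsto_C: "\<And>\<eta>. \<eta> > 0 \<Longrightarrow> \<exists>T\<^sub>0. \<forall>T\<ge>T\<^sub>0. C - \<eta> < \<Phi> T"
    using kernel_integral_converges[of "(real p + 1) / 2"] p unfolding \<Phi>_def by auto
  define \<delta> where "\<delta> = \<epsilon> * C * m ^ (p + 1) / 2"
  have \<delta>: "\<delta> > 0"
    using \<epsilon> C m by (simp add: \<delta>_def)
  obtain T\<^sub>0 where T\<^sub>0: "\<And>T. T \<ge> T\<^sub>0 \<Longrightarrow> C - \<delta> < \<Phi> T"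
    using \<Phi>_tendsto_C[OF \<delta>] by blast
  define n where "n = nat \<lceil>T\<^sub>0 * R / (m * \<delta>)\<rceil>"
  have "\<bar>1 / (x ^ p * y) - \<delta> / C * (\<Sum>k\<le>n. (x\<^sup>2 + (\<delta> * real k * y)\<^sup>2) powr (- ((real p + 1) / 2)))\<bar> \<le> \<epsilon>"
    if xy: "m \<le> x" "x \<le> R" "m \<le> y" "y \<le> R" for x y
  proof -
    have x: "x > 0" and y: "y > 0"
      using xy m by auto
    have "T\<^sub>0 \<le> \<delta> * n * y / x"
    proof -
      have "T\<^sub>0 * R / (m * \<delta>) \<le> n"
        unfolding n_def by (rule real_nat_ceiling_ge)
      then have "T\<^sub>0 \<le> \<delta> * n * m / R"
        using m \<delta> xy by (simp add: pos_divide_le_eq pos_le_divide_eq mult_ac)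
      also have "\<dots> \<le> \<delta> * n * y / x"
        using xy m \<delta> by (intro frac_le mult_left_mono) auto
      finally show ?thesis .
    qed
    moreover have "0 \<le> \<delta> * n * y / x"
      using x y \<delta> by simp
    ultimately have "\<bar>1 / (x ^ p * y) - \<delta> / C * (\<Sum>k\<le>n. (x\<^sup>2 + (\<delta> * real k * y)\<^sup>2) powr (- ((real p + 1) / 2)))\<bar>
        \<le> (\<delta> / (x ^ p * y) + \<delta> / x ^ (p + 1)) / C"
      using T\<^sub>0 \<Phi>_le_C by (intro kernel_riemann_sum_error[OF x y \<delta> C]) (auto simp: \<Phi>_def less_imp_le)
    also have "\<dots> \<le> (\<delta> / m ^ (p + 1) + \<delta> / m ^ (p + 1)) / C"
    proof -
      have "m ^ (p + 1) \<le> x ^ p * y" "m ^ (p + 1) \<le> x ^ (p + 1)"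
        using xy m by (auto intro!: mult_mono power_mono simp: mult.commute)
      then show ?thesis
        using m C \<delta> x y by (intro divide_right_mono add_mono divide_left_mono) auto
    qed
    also have "\<dots> = \<epsilon>"
      using C m by (simp add: \<delta>_def)
    finally show ?thesis .
  qed
  then show ?thesis
    using \<delta> C by (intro exI[of _ \<delta>] conjI exI[of _ "\<delta> / C"] exI[of _ n] allI impI) auto
qed

lemma linear_inj_norm_bounds_on_sphere:
  fixes h :: "'a::euclidean_space \<Rightarrow> 'b::euclidean_space"
  assumes "linear h" "inj h"
  shows "\<exists>a b. 0 < a \<and> (\<forall>\<theta>\<in>sphere 0 1. a \<le> norm (h \<theta>) \<and> norm (h \<theta>) \<le> b)"
proof -
  obtain a where "a > 0" "\<And>x. a * norm x \<le> norm (h x)"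
    using linear_inj_bounded_below_pos[OF assms] by blast
  moreover obtain b where "\<And>x. norm (h x) \<le> b * norm x"
    using linear_bounded[OF assms(1)] by blast
  ultimately show ?thesis
    by (metis mem_sphere_0 mult.right_neutral)
qed

lemma linear_inj_norm_sqrt_combination:
  fixes h g :: "'a::euclidean_space \<Rightarrow> 'a"
  assumes h: "linear h" "inj h" and g: "linear g" and \<alpha>: "\<alpha> > 0" and \<beta>: "\<beta> \<ge> 0"
  shows "\<exists>f::'a \<Rightarrow> 'a. linear f \<and> inj f \<and>
           (\<forall>x. norm (f x) = sqrt (\<alpha> * (norm (h x))\<^sup>2 + \<beta> * (norm (g x))\<^sup>2))"
proof -
  \<comment> \<open>P has the required norm but takes values in the product space; its range has full
    dimension, so an isometry maps it back onto the original space.\<close>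
  define P where "P x = (sqrt \<alpha> *\<^sub>R h x, sqrt \<beta> *\<^sub>R g x)" for x
  have P_linear: "linear P"
    unfolding P_def using h(1) g
    by (intro linearI) (auto simp: linear_add linear_scale scaleR_add_right)
  have P_norm: "norm (P x) = sqrt (\<alpha> * (norm (h x))\<^sup>2 + \<beta> * (norm (g x))\<^sup>2)" for x
    unfolding P_def norm_Pair using \<alpha> \<beta> by (simp add: power_mult_distrib)
  have P_inj: "inj P"
    using h(2) \<alpha> by (auto simp: inj_def P_def)
  have dim: "dim (range P) = dim (UNIV :: 'a set)"
    using P_linear P_inj by (intro dim_image_eq) (auto intro: inj_on_subset)
  obtain f :: "'a \<times> 'a \<Rightarrow> 'a"
    where f: "linear f" "f ` range P = UNIV" "\<And>z. z \<in> range P \<Longrightarrow> norm (f z) = norm z"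
    using isometry_subspaces[OF linear_subspace_image[OF P_linear subspace_UNIV] subspace_UNIV dim]
    by metis
  show ?thesis
  proof (intro exI[of _ "f \<circ> P"] conjI allI)
    show "linear (f \<circ> P)"
      using P_linear f(1) by (rule linear_compose)
    show "norm ((f \<circ> P) x) = sqrt (\<alpha> * (norm (h x))\<^sup>2 + \<beta> * (norm (g x))\<^sup>2)" for x
      using f(3) P_norm by simp
    show "inj (f \<circ> P)"
    proof (rule injI)
      fix x y
      assume "(f \<circ> P) x = (f \<circ> P) y"
      then have "f (P (x - y)) = 0"
        using f(1) P_linear by (simp add: linear_diff)
      then have "P (x - y) = 0"
        using f(3)[of "P (x - y)"] by simp
      then show "x = y"
        using P_inj P_linear by (simp add: linear_diff inj_eq)
    qed
  qed
qed

lemma inverse_sqrt_power_eq: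
  fixes c Q :: real and p :: nat
  assumes c: "c > 0" and Q: "Q > 0"
  shows "1 / sqrt (c powr (-2 / (real p + 1)) * Q) ^ (p + 1) = c * Q powr (- ((real p + 1) / 2))"
proof -
  define e where "e = (real p + 1) / 2"
  define z where "z = c powr (-2 / (real p + 1)) * Q"
  have z: "z > 0"
    using c Q by (simp add: z_def)
  have c_powr: "(c powr (-2 / (real p + 1))) powr e = 1 / c"
  proof -
    have "-2 / (real p + 1) * e = -1"
      by (simp add: e_def)
    then have "(c powr (-2 / (real p + 1))) powr e = c powr (-1)"
      by (simp only: powr_powr)
    then show ?thesis
      using c by (simp add: powr_minus divide_inverse)
  qed
  have "sqrt z ^ (p + 1) = (z powr (1 / 2)) ^ (p + 1)"
    using z by (simp add: powr_half_sqrt)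
  also have "\<dots> = (z powr (1 / 2)) powr real (p + 1)"
    using z by (intro powr_realpow[symmetric]) simp
  also have "\<dots> = z powr e"
    unfolding powr_powr e_def by (simp add: add.commute)
  also have "\<dots> = (c powr (-2 / (real p + 1))) powr e * Q powr e"
    unfolding z_def by (rule powr_mult)
  also have "\<dots> = Q powr e / c"
    unfolding c_powr by simp
  finally have "sqrt z ^ (p + 1) = Q powr e / c" .
  then show ?thesis
    unfolding z_def[symmetric] e_def[symmetric] using c by (simp add: powr_minus divide_inverse)
qed

lemma linear_inj_inverse_norm_power_eq:
  fixes h g :: "'a::euclidean_space \<Rightarrow> 'a" and c t :: real and p :: nat
  assumes h: "linear h" "inj h" and g: "linear g" and c: "c > 0"
  shows "\<exists>H::'a \<Rightarrow> 'a. linear H \<and> inj H \<and> (\<forall>\<theta>. h \<theta> \<noteq> 0 \<longrightarrow>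
           1 / norm (H \<theta>) ^ (p + 1) = c * ((norm (h \<theta>))\<^sup>2 + (t * norm (g \<theta>))\<^sup>2) powr (- ((real p + 1) / 2)))"
proof -
  define \<alpha> where "\<alpha> = c powr (-2 / (real p + 1))"
  have "\<alpha> > 0"
    using c by (simp add: \<alpha>_def)
  then obtain H :: "'a \<Rightarrow> 'a" where H: "linear H" "inj H"
    "\<And>x. norm (H x) = sqrt (\<alpha> * (norm (h x))\<^sup>2 + \<alpha> * t\<^sup>2 * (norm (g x))\<^sup>2)"
    using linear_inj_norm_sqrt_combination[OF h g, of \<alpha> "\<alpha> * t\<^sup>2"] by auto
  have "1 / norm (H \<theta>) ^ (p + 1) = c * ((norm (h \<theta>))\<^sup>2 + (t * norm (g \<theta>))\<^sup>2) powr (- ((real p + 1) / 2))"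
    if "h \<theta> \<noteq> 0" for \<theta>
  proof -
    have "norm (H \<theta>) = sqrt (\<alpha> * ((norm (h \<theta>))\<^sup>2 + (t * norm (g \<theta>))\<^sup>2))"
      unfolding H by (simp add: algebra_simps power_mult_distrib)
    moreover have "(norm (h \<theta>))\<^sup>2 + (t * norm (g \<theta>))\<^sup>2 > 0"
      using that by (simp add: add_pos_nonneg)
    ultimately show ?thesis
      using inverse_sqrt_power_eq[OF c] by (simp add: \<alpha>_def)
  qed
  then show ?thesis
    using H(1,2) by blast
qed

(* 1 / norm (h \<theta>) is the radial function of the ellipsoid inv h ` cball 0 1
   (lemma ellipsoid_with_radial below). *)
definition power_sum_approximable :: "nat \<Rightarrow> ('a::euclidean_space \<Rightarrow> real) \<Rightarrow> bool" where
  "power_sum_approximable p \<rho> \<longleftrightarrow>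
     (\<forall>\<epsilon>>0. \<exists>hs :: ('a \<Rightarrow> 'a) list. hs \<noteq> [] \<and> (\<forall>h\<in>set hs. linear h \<and> inj h) \<and>
        (\<forall>\<theta>\<in>sphere 0 1. \<bar>\<rho> \<theta> - (\<Sum>h\<leftarrow>hs. 1 / norm (h \<theta>) ^ p)\<bar> \<le> \<epsilon>))"

lemma power_sum_approximableE:
  fixes \<rho> :: "'a::euclidean_space \<Rightarrow> real"
  assumes "power_sum_approximable p \<rho>" "\<epsilon> > 0"
  obtains fs :: "('a \<Rightarrow> 'a) list" where "fs \<noteq> []" "\<And>f. f \<in> set fs \<Longrightarrow> linear f \<and> inj f"
    "\<And>\<theta>. \<theta> \<in> sphere 0 1 \<Longrightarrow> \<bar>\<rho> \<theta> - (\<Sum>f\<leftarrow>fs. 1 / norm (f \<theta>) ^ p)\<bar> \<le> \<epsilon>"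
proof -
  obtain hs :: "('a \<Rightarrow> 'a) list" where "hs \<noteq> []" "\<forall>h\<in>set hs. linear h \<and> inj h"
    "\<forall>\<theta>\<in>sphere 0 1. \<bar>\<rho> \<theta> - (\<Sum>h\<leftarrow>hs. 1 / norm (h \<theta>) ^ p)\<bar> \<le> \<epsilon>"
    using assms(1)[unfolded power_sum_approximable_def, rule_format, OF assms(2)] by (elim exE conjE)
  then show thesis
    using that by simp
qed

lemma power_sum_approximable_uniform_limit:
  fixes \<rho> :: "'a::euclidean_space \<Rightarrow> real"
  assumes "\<And>\<epsilon>. \<epsilon> > 0 \<Longrightarrow> \<exists>\<sigma>. power_sum_approximable p \<sigma> \<and> (\<forall>\<theta>\<in>sphere 0 1. \<bar>\<rho> \<theta> - \<sigma> \<theta>\<bar> \<le> \<epsilon>)"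
  shows "power_sum_approximable p \<rho>"
  unfolding power_sum_approximable_def
proof (intro allI impI)
  fix \<epsilon> :: real
  assume "\<epsilon> > 0"
  then obtain \<sigma> where \<sigma>: "power_sum_approximable p \<sigma>" "\<And>\<theta>. \<theta> \<in> sphere 0 1 \<Longrightarrow> \<bar>\<rho> \<theta> - \<sigma> \<theta>\<bar> \<le> \<epsilon> / 2"
    using assms[of "\<epsilon> / 2"] by auto
  obtain hs :: "('a \<Rightarrow> 'a) list" where hs: "hs \<noteq> []" "\<And>h. h \<in> set hs \<Longrightarrow> linear h \<and> inj h"
    "\<And>\<theta>. \<theta> \<in> sphere 0 1 \<Longrightarrow> \<bar>\<sigma> \<theta> - (\<Sum>h\<leftarrow>hs. 1 / norm (h \<theta>) ^ p)\<bar> \<le> \<epsilon> / 2"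
    using power_sum_approximableE[OF \<sigma>(1) half_gt_zero[OF \<open>\<epsilon> > 0\<close>]] by metis
  have "\<bar>\<rho> \<theta> - (\<Sum>h\<leftarrow>hs. 1 / norm (h \<theta>) ^ p)\<bar> \<le> \<epsilon>" if "\<theta> \<in> sphere 0 1" for \<theta>
    using \<sigma>(2)[OF that] hs(3)[OF that] by linarith
  with hs(1,2) show "\<exists>hs :: ('a \<Rightarrow> 'a) list. hs \<noteq> [] \<and> (\<forall>h\<in>set hs. linear h \<and> inj h) \<and>
      (\<forall>\<theta>\<in>sphere 0 1. \<bar>\<rho> \<theta> - (\<Sum>h\<leftarrow>hs. 1 / norm (h \<theta>) ^ p)\<bar> \<le> \<epsilon>)"
    by blast
qed

lemma power_sum_approximable_add:
  fixes \<rho> \<sigma> :: "'a::euclidean_space \<Rightarrow> real"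
  assumes "power_sum_approximable p \<rho>" "power_sum_approximable p \<sigma>"
  shows "power_sum_approximable p (\<lambda>\<theta>. \<rho> \<theta> + \<sigma> \<theta>)"
  unfolding power_sum_approximable_def
proof (intro allI impI)
  fix \<epsilon> :: real
  assume "\<epsilon> > 0"
  obtain hs :: "('a \<Rightarrow> 'a) list" where hs: "hs \<noteq> []" "\<And>h. h \<in> set hs \<Longrightarrow> linear h \<and> inj h"
    "\<And>\<theta>. \<theta> \<in> sphere 0 1 \<Longrightarrow> \<bar>\<rho> \<theta> - (\<Sum>h\<leftarrow>hs. 1 / norm (h \<theta>) ^ p)\<bar> \<le> \<epsilon> / 2"
    using power_sum_approximableE[OF assms(1) half_gt_zero[OF \<open>\<epsilon> > 0\<close>]] by metis
  obtain gs :: "('a \<Rightarrow> 'a) list" where gs: "gs \<noteq> []" "\<And>h. h \<in> set gs \<Longrightarrow> linear h \<and> inj h"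
    "\<And>\<theta>. \<theta> \<in> sphere 0 1 \<Longrightarrow> \<bar>\<sigma> \<theta> - (\<Sum>h\<leftarrow>gs. 1 / norm (h \<theta>) ^ p)\<bar> \<le> \<epsilon> / 2"
    using power_sum_approximableE[OF assms(2) half_gt_zero[OF \<open>\<epsilon> > 0\<close>]] by metis
  have "\<bar>\<rho> \<theta> + \<sigma> \<theta> - (\<Sum>h\<leftarrow>hs @ gs. 1 / norm (h \<theta>) ^ p)\<bar> \<le> \<epsilon>" if "\<theta> \<in> sphere 0 1" for \<theta>
    using hs(3)[OF that] gs(3)[OF that] unfolding map_append sum_list_append by arith
  with hs(1,2) gs(2) show "\<exists>hs :: ('a \<Rightarrow> 'a) list. hs \<noteq> [] \<and> (\<forall>h\<in>set hs. linear h \<and> inj h) \<and>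
      (\<forall>\<theta>\<in>sphere 0 1. \<bar>\<rho> \<theta> + \<sigma> \<theta> - (\<Sum>h\<leftarrow>hs. 1 / norm (h \<theta>) ^ p)\<bar> \<le> \<epsilon>)"
    by (intro exI[of _ "hs @ gs"]) auto
qed

lemma power_sum_approximable_sum_list:
  fixes \<phi> :: "'b \<Rightarrow> 'a::euclidean_space \<Rightarrow> real"
  assumes "xs \<noteq> []" "\<And>x. x \<in> set xs \<Longrightarrow> power_sum_approximable p (\<phi> x)"
  shows "power_sum_approximable p (\<lambda>\<theta>. \<Sum>x\<leftarrow>xs. \<phi> x \<theta>)"
  using assms
proof (induction xs)
  case (Cons x xs)
  then show ?case
    by (cases "xs = []") (auto intro: power_sum_approximable_add)
qed simp

lemma power_sum_approximable_inverse_norm_power: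
  fixes h :: "'a::euclidean_space \<Rightarrow> 'a"
  assumes "linear h" "inj h"
  shows "power_sum_approximable p (\<lambda>\<theta>. 1 / norm (h \<theta>) ^ p)"
  unfolding power_sum_approximable_def using assms by (intro allI impI exI[of _ "[h]"]) auto

lemma power_sum_approximable_inverse_power_mult:
  fixes h g :: "'a::euclidean_space \<Rightarrow> 'a"
  assumes h: "linear h" "inj h" and g: "linear g" "inj g" and p: "p \<ge> 1"
  shows "power_sum_approximable (p + 1) (\<lambda>\<theta>. 1 / (norm (h \<theta>) ^ p * norm (g \<theta>)))"
  unfolding power_sum_approximable_def
proof (intro allI impI)
  fix \<epsilon> :: real
  assume \<epsilon>: "\<epsilon> > 0"
  obtain a\<^sub>h b\<^sub>h where h_bounds: "0 < a\<^sub>h" "\<And>\<theta>. \<theta> \<in> sphere 0 1 \<Longrightarrow> a\<^sub>h \<le> norm (h \<theta>) \<and> norm (h \<theta>) \<le> b\<^sub>h"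
    using linear_inj_norm_bounds_on_sphere[OF h] by metis
  obtain a\<^sub>g b\<^sub>g where g_bounds: "0 < a\<^sub>g" "\<And>\<theta>. \<theta> \<in> sphere 0 1 \<Longrightarrow> a\<^sub>g \<le> norm (g \<theta>) \<and> norm (g \<theta>) \<le> b\<^sub>g"
    using linear_inj_norm_bounds_on_sphere[OF g] by metis
  define m where "m = min a\<^sub>h a\<^sub>g"
  define R where "R = max b\<^sub>h b\<^sub>g"
  have "m > 0"
    using h_bounds(1) g_bounds(1) by (simp add: m_def)
  then obtain \<delta> c n where \<delta>: "\<delta> > 0" and c: "c > 0" and approx: "\<And>x y. m \<le> x \<Longrightarrow> x \<le> R \<Longrightarrow> m \<le> y \<Longrightarrow> y \<le> R \<Longrightarrow>
      \<bar>1 / (x ^ p * y) - c * (\<Sum>k\<le>n. (x\<^sup>2 + (\<delta> * real k * y)\<^sup>2) powr (- ((real p + 1) / 2)))\<bar> \<le> \<epsilon>"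
    using inverse_power_mult_approx[OF p _ \<epsilon>, of m R] by metis
  have "\<exists>H::'a \<Rightarrow> 'a. linear H \<and> inj H \<and> (\<forall>\<theta>. h \<theta> \<noteq> 0 \<longrightarrow> 1 / norm (H \<theta>) ^ (p + 1)
      = c * ((norm (h \<theta>))\<^sup>2 + (\<delta> * real k * norm (g \<theta>))\<^sup>2) powr (- ((real p + 1) / 2)))" for k
    by (rule linear_inj_inverse_norm_power_eq[OF h g(1) c])
  then obtain H :: "nat \<Rightarrow> 'a \<Rightarrow> 'a" where H: "\<And>k. linear (H k)" "\<And>k. inj (H k)"
    "\<And>k \<theta>. h \<theta> \<noteq> 0 \<Longrightarrow> 1 / norm (H k \<theta>) ^ (p + 1)
       = c * ((norm (h \<theta>))\<^sup>2 + (\<delta> * real k * norm (g \<theta>))\<^sup>2) powr (- ((real p + 1) / 2))"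
    by metis
  have "\<bar>1 / (norm (h \<theta>) ^ p * norm (g \<theta>)) - (\<Sum>f\<leftarrow>map H [0..<Suc n]. 1 / norm (f \<theta>) ^ (p + 1))\<bar> \<le> \<epsilon>"
    if \<theta>: "\<theta> \<in> sphere 0 1" for \<theta>
  proof -
    define x y where "x = norm (h \<theta>)" and "y = norm (g \<theta>)"
    have xy: "m \<le> x" "x \<le> R" "m \<le> y" "y \<le> R"
      using h_bounds(2)[OF \<theta>] g_bounds(2)[OF \<theta>] by (auto simp: x_def y_def m_def R_def)
    have "h \<theta> \<noteq> 0"
      using xy \<open>m > 0\<close> by (auto simp: x_def)
    then have H_term:
      "1 / norm (H k \<theta>) ^ (p + 1) = c * (x\<^sup>2 + (\<delta> * real k * y)\<^sup>2) powr (- ((real p + 1) / 2))" for k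
      unfolding x_def y_def by (rule H(3))
    have "(\<Sum>f\<leftarrow>map H [0..<Suc n]. 1 / norm (f \<theta>) ^ (p + 1))
        = (\<Sum>k\<le>n. 1 / norm (H k \<theta>) ^ (p + 1))"
      by (simp only: map_map interv_sum_list_conv_sum_set_nat set_upt atLeast0LessThan
          lessThan_Suc_atMost comp_def)
    also have "\<dots> = c * (\<Sum>k\<le>n. (x\<^sup>2 + (\<delta> * real k * y)\<^sup>2) powr (- ((real p + 1) / 2)))"
      by (simp only: H_term sum_distrib_left)
    finally show ?thesis
      using approx[OF xy] by (simp add: x_def y_def)
  qed
  moreover have "\<forall>f\<in>set (map H [0..<Suc n]). linear f \<and> inj f"
    using H by auto
  ultimately show "\<exists>hs :: ('a \<Rightarrow> 'a) list. hs \<noteq> [] \<and> (\<forall>f\<in>set hs. linear f \<and> inj f) \<and>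
      (\<forall>\<theta>\<in>sphere 0 1. \<bar>1 / (norm (h \<theta>) ^ p * norm (g \<theta>)) - (\<Sum>f\<leftarrow>hs. 1 / norm (f \<theta>) ^ (p + 1))\<bar> \<le> \<epsilon>)"
    by (intro exI[of _ "map H [0..<Suc n]"]) auto
qed

lemma power_sum_approximable_divide_norm:
  fixes \<rho> :: "'a::euclidean_space \<Rightarrow> real" and g :: "'a \<Rightarrow> 'a"
  assumes \<rho>: "power_sum_approximable p \<rho>" and g: "linear g" "inj g" and p: "p \<ge> 1"
  shows "power_sum_approximable (p + 1) (\<lambda>\<theta>. \<rho> \<theta> / norm (g \<theta>))"
proof (rule power_sum_approximable_uniform_limit)
  fix \<epsilon> :: real
  assume \<epsilon>: "\<epsilon> > 0"
  obtain a b where a: "0 < a" and g_bounds: "\<And>\<theta>. \<theta> \<in> sphere 0 1 \<Longrightarrow> a \<le> norm (g \<theta>) \<and> norm (g \<theta>) \<le> b"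
    using linear_inj_norm_bounds_on_sphere[OF g] by metis
  then have "\<epsilon> * a > 0"
    using \<epsilon> by simp
  then obtain hs :: "('a \<Rightarrow> 'a) list" where hs: "hs \<noteq> []" "\<And>h. h \<in> set hs \<Longrightarrow> linear h \<and> inj h"
    "\<And>\<theta>. \<theta> \<in> sphere 0 1 \<Longrightarrow> \<bar>\<rho> \<theta> - (\<Sum>h\<leftarrow>hs. 1 / norm (h \<theta>) ^ p)\<bar> \<le> \<epsilon> * a"
    using power_sum_approximableE[OF \<rho>] by metis
  define \<sigma> where "\<sigma> \<theta> = (\<Sum>h\<leftarrow>hs. 1 / (norm (h \<theta>) ^ p * norm (g \<theta>)))" for \<theta>
  have "power_sum_approximable (p + 1) \<sigma>"
    unfolding \<sigma>_def using hs(1,2) g p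
    by (intro power_sum_approximable_sum_list power_sum_approximable_inverse_power_mult) auto
  moreover have "\<bar>\<rho> \<theta> / norm (g \<theta>) - \<sigma> \<theta>\<bar> \<le> \<epsilon>" if \<theta>: "\<theta> \<in> sphere 0 1" for \<theta>
  proof -
    have N: "a \<le> norm (g \<theta>)"
      using g_bounds[OF \<theta>] by simp
    have "\<sigma> \<theta> = (\<Sum>h\<leftarrow>hs. 1 / norm (h \<theta>) ^ p) / norm (g \<theta>)"
      by (simp add: \<sigma>_def divide_inverse sum_list_mult_const)
    then have "\<bar>\<rho> \<theta> / norm (g \<theta>) - \<sigma> \<theta>\<bar> = \<bar>\<rho> \<theta> - (\<Sum>h\<leftarrow>hs. 1 / norm (h \<theta>) ^ p)\<bar> / norm (g \<theta>)"
      by (simp add: diff_divide_distrib[symmetric])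
    also have "\<dots> \<le> \<epsilon> * a / a"
      using hs(3)[OF \<theta>] N a \<epsilon> by (intro frac_le) auto
    finally show ?thesis
      using a by simp
  qed
  ultimately show "\<exists>\<sigma>. power_sum_approximable (p + 1) \<sigma> \<and>
      (\<forall>\<theta>\<in>sphere 0 1. \<bar>\<rho> \<theta> / norm (g \<theta>) - \<sigma> \<theta>\<bar> \<le> \<epsilon>)"
    by blast
qed

lemma power_sum_approximable_prod:
  fixes G :: "nat \<Rightarrow> 'a::euclidean_space \<Rightarrow> 'a"
  assumes "p \<ge> 1" "\<And>j. j < p \<Longrightarrow> linear (G j) \<and> inj (G j)"
  shows "power_sum_approximable p (\<lambda>\<theta>. \<Prod>j<p. 1 / norm (G j \<theta>))"
  using assms
proof (induction p rule: nat_induct_at_least)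
  case base
  then show ?case
    using power_sum_approximable_inverse_norm_power[of "G 0" 1] by simp
next
  case (Suc p)
  then have "power_sum_approximable (p + 1) (\<lambda>\<theta>. (\<Prod>j<p. 1 / norm (G j \<theta>)) / norm (G p \<theta>))"
    by (intro power_sum_approximable_divide_norm) auto
  then show ?case
    by (simp add: divide_inverse)
qed

lemma radial_linear_image_cball:
  fixes f g :: "'a::euclidean_space \<Rightarrow> 'a"
  assumes f: "linear f" and g: "linear g" and gf: "\<And>x. g (f x) = x" and fg: "\<And>y. f (g y) = y"
    and \<theta>: "\<theta> \<noteq> 0"
  shows "radial (f ` cball 0 1) \<theta> = 1 / norm (g \<theta>)"
proof -
  have g\<theta>: "g \<theta> \<noteq> 0"
    using \<theta> fg f by (metis linear_0)
  have "r *\<^sub>R \<theta> \<in> f ` cball 0 1 \<longleftrightarrow> norm (r *\<^sub>R g \<theta>) \<le> 1" for r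
  proof -
    have "r *\<^sub>R \<theta> = f (r *\<^sub>R g \<theta>)"
      using f fg by (simp add: linear_scale)
    then show ?thesis
      using gf by (metis image_iff mem_cball_0)
  qed
  then have "{r. r > 0 \<and> r *\<^sub>R \<theta> \<in> f ` cball 0 1} = {0<..1 / norm (g \<theta>)}"
    using g\<theta> by (auto simp: field_simps)
  then show ?thesis
    unfolding radial_def using g\<theta> by simp
qed

lemma ellipsoid_radial_eq:
  fixes E :: "'a::euclidean_space set"
  assumes "is_ellipsoid E"
  shows "\<exists>g::'a \<Rightarrow> 'a. linear g \<and> inj g \<and> (\<forall>\<theta>. \<theta> \<noteq> 0 \<longrightarrow> radial E \<theta> = 1 / norm (g \<theta>))"
proof -
  obtain f :: "'a \<Rightarrow> 'a" where f: "linear f" "inj f" "E = f ` cball 0 1"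
    using assms unfolding is_ellipsoid_def by blast
  then obtain g where g: "linear g" "\<And>x. g (f x) = x" "\<And>y. f (g y) = y"
    using linear_injective_isomorphism by metis
  then have "inj g"
    by (metis injI)
  then show ?thesis
    using g f radial_linear_image_cball[OF f(1) g] by blast
qed

lemma ellipsoid_with_radial:
  fixes h :: "'a::euclidean_space \<Rightarrow> 'a"
  assumes "linear h" "inj h"
  shows "\<exists>E. is_ellipsoid E \<and> (\<forall>\<theta>. \<theta> \<noteq> 0 \<longrightarrow> radial E \<theta> = 1 / norm (h \<theta>))"
proof -
  obtain g where g: "linear g" "\<And>x. g (h x) = x" "\<And>y. h (g y) = y"
    using linear_injective_isomorphism[OF assms] by metis
  then have "is_ellipsoid (g ` cball 0 1)"
    unfolding is_ellipsoid_def by (metis injI)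
  then show ?thesis
    using radial_linear_image_cball[OF g(1) assms(1) g(3,2)] by blast
qed

lemma radial_body_of_radial:
  fixes \<rho> :: "'a::euclidean_space \<Rightarrow> real"
  assumes "norm \<theta> = 1" "\<rho> \<theta> > 0"
  shows "radial (body_of_radial \<rho>) \<theta> = \<rho> \<theta>"
proof -
  have "r *\<^sub>R \<theta> \<in> body_of_radial \<rho> \<longleftrightarrow> r \<le> \<rho> \<theta>" if "r > 0" for r
    using that assms(1) by (auto simp: body_of_radial_def)
  then have "{r. r > 0 \<and> r *\<^sub>R \<theta> \<in> body_of_radial \<rho>} = {0<..\<rho> \<theta>}"
    by auto
  then show ?thesis
    unfolding radial_def using assms(2) by simp
qed

lemma compact_body_of_radial:
  fixes \<rho> :: "'a::euclidean_space \<Rightarrow> real"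
  assumes cont: "continuous_on (- {0}) \<rho>"
  shows "compact (body_of_radial \<rho>)"
proof -
  have "compact (\<rho> ` sphere 0 1)"
    using cont by (intro compact_continuous_image compact_sphere) (auto elim: continuous_on_subset)
  then obtain M where M: "\<And>\<theta>. \<theta> \<in> sphere 0 1 \<Longrightarrow> \<rho> \<theta> \<le> M"
    using compact_imp_bounded bounded_real by (metis abs_le_D1 imageI)
  have "body_of_radial \<rho> \<subseteq> cball 0 (max M 0)"
  proof
    fix x
    assume "x \<in> body_of_radial \<rho>"
    then show "x \<in> cball 0 (max M 0)"
      using M[of "x /\<^sub>R norm x"] by (cases "x = 0") (auto simp: body_of_radial_def)
  qed
  then have "bounded (body_of_radial \<rho>)"
    using bounded_cball bounded_subset by blast
  moreover have "open (- body_of_radial \<rho>)"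
  proof -
    have "continuous_on (- {0}) (\<lambda>x::'a. \<rho> (x /\<^sub>R norm x) - norm x)"
      by (intro continuous_intros continuous_on_compose2[OF cont]) auto
    then have "open ((- {0}) \<inter> (\<lambda>x::'a. \<rho> (x /\<^sub>R norm x) - norm x) -` {..<0})"
      by (rule continuous_open_preimage) auto
    moreover have "(- {0}) \<inter> (\<lambda>x::'a. \<rho> (x /\<^sub>R norm x) - norm x) -` {..<0} = - body_of_radial \<rho>"
      by (auto simp: body_of_radial_def)
    ultimately show ?thesis
      by simp
  qed
  ultimately show ?thesis
    by (simp add: compact_eq_bounded_closed closed_open)
qed

lemma body_of_radial_scaleR:
  fixes \<rho> :: "'a::euclidean_space \<Rightarrow> real"
  assumes x: "x \<in> body_of_radial \<rho>" and t: "0 \<le> t" "t \<le> 1"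
  shows "t *\<^sub>R x \<in> body_of_radial \<rho>"
proof (cases "t = 0 \<or> x = 0")
  case False
  then have direction: "(t *\<^sub>R x) /\<^sub>R norm (t *\<^sub>R x) = x /\<^sub>R norm x"
    using t by simp
  have shorter: "norm (t *\<^sub>R x) \<le> norm x"
    using t by (simp add: mult_left_le_one_le)
  have "norm x \<le> \<rho> (x /\<^sub>R norm x)"
    using x False by (simp add: body_of_radial_def)
  then have "norm (t *\<^sub>R x) \<le> \<rho> ((t *\<^sub>R x) /\<^sub>R norm (t *\<^sub>R x))"
    unfolding direction using shorter by linarith
  then show ?thesis
    unfolding body_of_radial_def by blast
qed (auto simp: body_of_radial_def)

lemma star_body_body_of_radial:
  fixes \<rho> :: "'a::euclidean_space \<Rightarrow> real"
  assumes cont: "continuous_on (- {0}) \<rho>" and pos: "\<And>x. x \<noteq> 0 \<Longrightarrow> \<rho> x > 0"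
    and even: "\<And>x. \<rho> (- x) = \<rho> x"
  shows "star_body (body_of_radial \<rho>)"
proof -
  have \<rho>_pos: "\<rho> \<theta> > 0" and radial_eq: "radial (body_of_radial \<rho>) \<theta> = \<rho> \<theta>"
    if "\<theta> \<in> sphere 0 1" for \<theta>
  proof -
    have "\<theta> \<noteq> 0"
      using that by auto
    then show "\<rho> \<theta> > 0"
      by (rule pos)
    then show "radial (body_of_radial \<rho>) \<theta> = \<rho> \<theta>"
      using that by (intro radial_body_of_radial) auto
  qed
  have star: "t *\<^sub>R x \<in> body_of_radial \<rho>" if "x \<in> body_of_radial \<rho>" "t \<in> {0..1}" for x t
    using that by (intro body_of_radial_scaleR) auto
  have symmetric: "- x \<in> body_of_radial \<rho>" if "x \<in> body_of_radial \<rho>" for x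
    using that even[of "x /\<^sub>R norm x"] by (auto simp: body_of_radial_def)
  have "continuous_on (sphere 0 1) \<rho>"
    using cont by (rule continuous_on_subset) auto
  then have "continuous_on (sphere 0 1) (radial (body_of_radial \<rho>))"
    by (rule continuous_on_eq) (simp add: radial_eq)
  moreover have "radial (body_of_radial \<rho>) \<theta> > 0" if "\<theta> \<in> sphere 0 1" for \<theta>
    using \<rho>_pos[OF that] radial_eq[OF that] by simp
  ultimately show ?thesis
    unfolding star_body_def using compact_body_of_radial[OF cont] star symmetric by simp
qed

lemma radial_dist_le:
  fixes K L :: "'a::euclidean_space set"
  assumes "\<And>\<theta>. \<theta> \<in> sphere 0 1 \<Longrightarrow> \<bar>radial K \<theta> - radial L \<theta>\<bar> \<le> e"
  shows "0 \<le> radial_dist K L" "radial_dist K L \<le> e"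
proof -
  have nonempty: "sphere (0::'a) 1 \<noteq> {}"
    by simp
  then obtain \<theta> :: 'a where "\<theta> \<in> sphere 0 1"
    by blast
  moreover have "bdd_above ((\<lambda>\<theta>. \<bar>radial K \<theta> - radial L \<theta>\<bar>) ` sphere 0 1)"
    using assms by (intro bdd_aboveI2) auto
  ultimately have "\<bar>radial K \<theta> - radial L \<theta>\<bar> \<le> radial_dist K L"
    unfolding radial_dist_def by (rule cSUP_upper)
  then show "0 \<le> radial_dist K L"
    by linarith
  show "radial_dist K L \<le> e"
    unfolding radial_dist_def using nonempty assms by (rule cSUP_least)
qed

lemma ellipsoid_power_sum_body:
  fixes hs :: "('a::euclidean_space \<Rightarrow> 'a) list" and l :: nat
  assumes hs: "hs \<noteq> []" "\<And>h. h \<in> set hs \<Longrightarrow> linear h \<and> inj h"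
  defines "\<rho> \<equiv> \<lambda>\<theta>. \<Sum>h\<leftarrow>hs. 1 / norm (h \<theta>) ^ l"
  shows "star_body (body_of_radial \<rho>)"
    and "\<And>\<theta>. \<theta> \<in> sphere 0 1 \<Longrightarrow> radial (body_of_radial \<rho>) \<theta> = \<rho> \<theta>"
    and "\<exists>m. \<exists>F :: nat \<Rightarrow> 'a set. (\<forall>j<m. is_ellipsoid (F j))
           \<and> (\<forall>\<theta>\<in>sphere 0 1. \<rho> \<theta> = (\<Sum>j<m. radial (F j) \<theta> ^ l))"
proof -
  define m where "m = length hs"
  have H: "linear (hs ! j)" "inj (hs ! j)" if "j < m" for j
    using hs(2)[OF nth_mem] that by (auto simp: m_def)
  have \<rho>_eq: "\<rho> \<theta> = (\<Sum>j<m. 1 / norm ((hs ! j) \<theta>) ^ l)" for \<theta>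
    by (simp add: \<rho>_def m_def sum_list_sum_nth atLeast0LessThan)
  have H_nonzero: "(hs ! j) \<theta> \<noteq> 0" if "j < m" "\<theta> \<noteq> 0" for j \<theta>
    using H[OF that(1)] that(2) by (metis linear_0 injD)
  have \<rho>_pos: "\<rho> \<theta> > 0" if "\<theta> \<noteq> 0" for \<theta>
    unfolding \<rho>_eq using hs(1) H_nonzero[OF _ that] by (intro sum_pos) (auto simp: m_def)
  have \<rho>_cont: "continuous_on (- {0}) \<rho>"
    unfolding \<rho>_eq[abs_def] using H H_nonzero
    by (intro continuous_intros linear_continuous_on) (auto simp: linear_conv_bounded_linear)
  have \<rho>_even: "\<rho> (- \<theta>) = \<rho> \<theta>" for \<theta>
    unfolding \<rho>_eq using H by (simp add: linear_neg)
  show "star_body (body_of_radial \<rho>)"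
    using \<rho>_cont \<rho>_pos \<rho>_even by (rule star_body_body_of_radial)
  show "radial (body_of_radial \<rho>) \<theta> = \<rho> \<theta>" if "\<theta> \<in> sphere 0 1" for \<theta>
    using that by (intro radial_body_of_radial \<rho>_pos) auto
  have "\<forall>j<m. \<exists>E. is_ellipsoid E \<and> (\<forall>\<theta>. \<theta> \<noteq> 0 \<longrightarrow> radial E \<theta> = 1 / norm ((hs ! j) \<theta>))"
    using H ellipsoid_with_radial by blast
  then obtain F where F: "\<And>j. j < m \<Longrightarrow> is_ellipsoid (F j)"
    "\<And>j \<theta>. j < m \<Longrightarrow> \<theta> \<noteq> 0 \<Longrightarrow> radial (F j) \<theta> = 1 / norm ((hs ! j) \<theta>)"
    by metis
  have F_sum: "\<rho> \<theta> = (\<Sum>j<m. radial (F j) \<theta> ^ l)" if "\<theta> \<in> sphere 0 1" for \<theta>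
  proof -
    have "\<theta> \<noteq> 0"
      using that by auto
    then show ?thesis
      unfolding \<rho>_eq using F(2) by (intro sum.cong) (auto simp: power_one_over)
  qed
  show "\<exists>m. \<exists>F :: nat \<Rightarrow> 'a set. (\<forall>j<m. is_ellipsoid (F j))
      \<and> (\<forall>\<theta>\<in>sphere 0 1. \<rho> \<theta> = (\<Sum>j<m. radial (F j) \<theta> ^ l))"
    by (intro exI[of _ m] exI[of _ F] conjI allI impI ballI F(1) F_sum)
qed

lemma power_sum_approximable_ellipsoid_bodies_tendsto:
  fixes \<rho> :: "'a::euclidean_space \<Rightarrow> real"
  assumes \<rho>: "power_sum_approximable l \<rho>" and \<rho>_pos: "\<And>\<theta>. \<theta> \<in> sphere 0 1 \<Longrightarrow> \<rho> \<theta> > 0"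
  shows "\<exists>Ls :: nat \<Rightarrow> 'a set. (\<forall>i. star_body (Ls i))
           \<and> (\<lambda>i. radial_dist (Ls i) (body_of_radial \<rho>)) \<longlonglongrightarrow> 0
           \<and> (\<forall>i. \<exists>m. \<exists>F :: nat \<Rightarrow> 'a set. (\<forall>j<m. is_ellipsoid (F j))
                 \<and> (\<forall>\<theta>\<in>sphere 0 1. radial (Ls i) \<theta> = (\<Sum>j<m. radial (F j) \<theta> ^ l)))"
proof -
  have "\<exists>hs :: ('a \<Rightarrow> 'a) list. hs \<noteq> [] \<and> (\<forall>h\<in>set hs. linear h \<and> inj h) \<and>
      (\<forall>\<theta>\<in>sphere 0 1. \<bar>\<rho> \<theta> - (\<Sum>h\<leftarrow>hs. 1 / norm (h \<theta>) ^ l)\<bar> \<le> inverse (real (Suc i)))" for i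
    using \<rho> unfolding power_sum_approximable_def by simp
  then obtain hs :: "nat \<Rightarrow> ('a \<Rightarrow> 'a) list" where hs: "\<And>i. hs i \<noteq> []"
    "\<And>i h. h \<in> set (hs i) \<Longrightarrow> linear h \<and> inj h"
    "\<And>i \<theta>. \<theta> \<in> sphere 0 1 \<Longrightarrow> \<bar>\<rho> \<theta> - (\<Sum>h\<leftarrow>hs i. 1 / norm (h \<theta>) ^ l)\<bar> \<le> inverse (real (Suc i))"
    by metis
  define Ls where "Ls i = body_of_radial (\<lambda>\<theta>. \<Sum>h\<leftarrow>hs i. 1 / norm (h \<theta>) ^ l)" for i
  have Ls_star: "star_body (Ls i)"
    and Ls_radial: "\<And>\<theta>. \<theta> \<in> sphere 0 1 \<Longrightarrow> radial (Ls i) \<theta> = (\<Sum>h\<leftarrow>hs i. 1 / norm (h \<theta>) ^ l)"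
    for i
    using ellipsoid_power_sum_body[where hs = "hs i" and l = l] hs(1,2) unfolding Ls_def by auto
  have Ls_ellipsoids: "\<exists>m. \<exists>F :: nat \<Rightarrow> 'a set. (\<forall>j<m. is_ellipsoid (F j))
      \<and> (\<forall>\<theta>\<in>sphere 0 1. radial (Ls i) \<theta> = (\<Sum>j<m. radial (F j) \<theta> ^ l))" for i
    using ellipsoid_power_sum_body(3)[where hs = "hs i" and l = l] hs(1,2) Ls_radial by auto
  have "\<bar>radial_dist (Ls i) (body_of_radial \<rho>)\<bar> \<le> inverse (real (Suc i))" for i
  proof -
    have "\<bar>radial (Ls i) \<theta> - radial (body_of_radial \<rho>) \<theta>\<bar> \<le> inverse (real (Suc i))"
      if \<theta>: "\<theta> \<in> sphere 0 1" for \<theta>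
      using Ls_radial[OF \<theta>] radial_body_of_radial[of \<theta> \<rho>] \<theta> \<rho>_pos[OF \<theta>] hs(3)[OF \<theta>, of i]
      by (simp add: abs_minus_commute)
    then show ?thesis
      using radial_dist_le by (metis abs_of_nonneg)
  qed
  then have "(\<lambda>i. radial_dist (Ls i) (body_of_radial \<rho>)) \<longlonglongrightarrow> 0"
    by (intro Lim_null_comparison[OF _ LIMSEQ_inverse_real_of_nat]) (simp add: always_eventually)
  then show ?thesis
    using Ls_star Ls_ellipsoids by blast
qed

lemma radial_ellipsoid_pos:
  fixes E :: "'a::euclidean_space set"
  assumes "is_ellipsoid E" "\<theta> \<noteq> 0"
  shows "radial E \<theta> > 0"
proof -
  obtain g :: "'a \<Rightarrow> 'a" where g: "linear g" "inj g" "radial E \<theta> = 1 / norm (g \<theta>)"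
    using ellipsoid_radial_eq[OF assms(1)] assms(2) by blast
  then have "g \<theta> \<noteq> 0"
    using assms(2) by (metis linear_0 injD)
  then show ?thesis
    using g(3) by simp
qed

lemma power_sum_approximable_prod_ellipsoids:
  fixes E :: "nat \<Rightarrow> 'a::euclidean_space set"
  assumes "1 \<le> k" "k \<le> l" "\<And>j. j < k \<Longrightarrow> is_ellipsoid (E j)"
  shows "power_sum_approximable l (\<lambda>\<theta>. \<Prod>j<k. radial (E j) \<theta>)"
proof (rule power_sum_approximable_uniform_limit)
  fix \<epsilon> :: real
  assume "\<epsilon> > 0"
  have "\<forall>j<k. \<exists>g::'a \<Rightarrow> 'a. linear g \<and> inj g \<and> (\<forall>\<theta>. \<theta> \<noteq> 0 \<longrightarrow> radial (E j) \<theta> = 1 / norm (g \<theta>))"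
    using assms(3) ellipsoid_radial_eq by blast
  then obtain g :: "nat \<Rightarrow> 'a \<Rightarrow> 'a" where g: "\<And>j. j < k \<Longrightarrow> linear (g j) \<and> inj (g j)"
    "\<And>j \<theta>. j < k \<Longrightarrow> \<theta> \<noteq> 0 \<Longrightarrow> radial (E j) \<theta> = 1 / norm (g j \<theta>)"
    by metis
  define G where "G j = (if j < k then g j else id)" for j
  have "power_sum_approximable l (\<lambda>\<theta>. \<Prod>j<l. 1 / norm (G j \<theta>))"
    using assms(1,2) g(1) by (intro power_sum_approximable_prod) (auto simp: G_def linear_id)
  moreover have "(\<Prod>j<k. radial (E j) \<theta>) = (\<Prod>j<l. 1 / norm (G j \<theta>))" if "\<theta> \<in> sphere 0 1" for \<theta>
  proof -
    have "\<theta> \<noteq> 0"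
      using that by auto
    have "(\<Prod>j<l. 1 / norm (G j \<theta>)) = (\<Prod>j<k. 1 / norm (G j \<theta>))"
      using assms(2) that by (intro prod.mono_neutral_right) (auto simp: G_def)
    also have "\<dots> = (\<Prod>j<k. radial (E j) \<theta>)"
      using \<open>\<theta> \<noteq> 0\<close> g(2) by (intro prod.cong) (auto simp: G_def)
    finally show ?thesis
      by simp
  qed
  ultimately show "\<exists>\<sigma>. power_sum_approximable l \<sigma> \<and>
      (\<forall>\<theta>\<in>sphere 0 1. \<bar>(\<Prod>j<k. radial (E j) \<theta>) - \<sigma> \<theta>\<bar> \<le> \<epsilon>)"
    using \<open>\<epsilon> > 0\<close> by (intro exI[of _ "\<lambda>\<theta>. \<Prod>j<l. 1 / norm (G j \<theta>)"]) auto
qed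

theorem mainTheorem2:
  fixes E :: "nat \<Rightarrow> 'a::euclidean_space set" and k l :: nat
  assumes "1 \<le> k" and "k \<le> DIM('a) - 1"
    and "\<And>j. j < k \<Longrightarrow> is_ellipsoid (E j)"
    and "k \<le> l" and "l \<le> DIM('a) - 1"
  shows "\<exists>Ls :: nat \<Rightarrow> 'a set.
           (\<forall>i. star_body (Ls i))
         \<and> (\<lambda>i. radial_dist (Ls i) (body_of_radial (\<lambda>\<theta>. \<Prod>j<k. radial (E j) \<theta>))) \<longlonglongrightarrow> 0
         \<and> (\<forall>i. \<exists>m. \<exists>F :: nat \<Rightarrow> 'a set. (\<forall>j<m. is_ellipsoid (F j))
                 \<and> (\<forall>\<theta>\<in>sphere 0 1. radial (Ls i) \<theta> = (\<Sum>j<m. radial (F j) \<theta> ^ l)))"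
proof (rule power_sum_approximable_ellipsoid_bodies_tendsto)
  show "power_sum_approximable l (\<lambda>\<theta>. \<Prod>j<k. radial (E j) \<theta>)"
    using assms(1,4,3) by (rule power_sum_approximable_prod_ellipsoids)
  show "(\<Prod>j<k. radial (E j) \<theta>) > 0" if "\<theta> \<in> sphere 0 1" for \<theta>
    using that assms(3) by (intro prod_pos radial_ellipsoid_pos) auto
qed

end
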